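(* Let $A, B, C \in \mathbb{Z}$ with $A > 0$, $C > 0$, $B < 0$, $2A + B > 0$ and $A + B + C > 0$, suppose the polynomial $Ax^2 + Bx + C$ is irreducible, and let $\beta$ be a real root of it. Then there exists $\alpha \in \mathbb{R}$ with $p_\beta(\alpha) = \infty$.
   Context: For $\beta, \alpha \in \mathbb{C}$, $p_\beta(\alpha) \in \mathbb{Z}_{\geq 0}\cup\{\infty\}$ is the number of polynomials $f \in \mathbb{Z}_{\geq 0}[x]$ (non-negative integer coefficients) with $f(\beta) = \alpha$. *)

theory Defs
  imports Complex_Main "HOL-Computational_Algebra.Polynomial" "HOL-Library.Extended_Nat"
begin

definition nn_polys_at :: "complex \<Rightarrow> complex \<Rightarrow> nat poly set" where
  "nn_polys_at \<beta> \<alpha> = {f. poly (map_poly of_nat f) \<beta> = \<alpha>}"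

definition p_count :: "complex \<Rightarrow> complex \<Rightarrow> enat" where
  "p_count \<beta> \<alpha> = (if finite (nn_polys_at \<beta> \<alpha>) then enat (card (nn_polys_at \<beta> \<alpha>)) else \<infinity>)"

end

theory Submission
  imports Defs
begin

text \<open>If \<open>\<alpha> = \<beta> \<alpha> + g(\<beta>)\<close> for a nonzero polynomial \<open>g\<close> with non-negative integer
coefficients, then \<open>f \<mapsto> x f + g\<close> maps representations of \<open>\<alpha>\<close> to representations of \<open>\<alpha>\<close>
and strictly increases \<open>f(1)\<close>, so one representation yields infinitely many.
Such an \<open>\<alpha> = Q(\<beta>)\<close> comes from a congruence \<open>(1 - x) Q \<equiv> Q'\<close> modulo \<open>A x^2 - b x + C\<close>,
\<open>b = -B\<close>, with \<open>Q\<close>, \<open>Q'\<close> non-negative: for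
\<open>Q = \<Sum>j=1..b (x + ... + x^j) + A x^(b+2)\<close> and
\<open>Q' = C + C x + (A + C - b - 1) (x^2 + ... + x^(b+1)) + (2A - b) x^(b+2)\<close>
the difference \<open>Q' - (1 - x) Q\<close> is \<open>(A x^2 - b x + C) (1 + x + ... + x^(b+1))\<close>.
The hypotheses \<open>2A + B > 0\<close> and \<open>A + B + C > 0\<close> make the coefficients of \<open>Q'\<close>
non-negative.\<close>

lemma map_poly_of_nat_add:
  "map_poly of_nat (p + q) = map_poly of_nat p + (map_poly of_nat q :: 'a::semiring_1 poly)"
  by (intro poly_eqI) (simp add: coeff_map_poly)

lemma map_poly_of_nat_sum:
  "map_poly of_nat (\<Sum>i\<in>I. p i) = (\<Sum>i\<in>I. map_poly of_nat (p i) :: 'a::semiring_1 poly)"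
  by (induction I rule: infinite_finite_induct) (simp_all add: map_poly_of_nat_add)

lemma poly_map_poly_of_nat_of_real:
  "poly (map_poly of_nat p) (of_real x)
     = (of_real (poly (map_poly of_nat p) x) :: 'a::{comm_ring_1,real_algebra_1})"
  by (induction p) (simp_all add: map_poly_pCons)

lemma poly_nat_one_pos: "p \<noteq> 0 \<Longrightarrow> 0 < poly p (1::nat)"
  by (induction p) auto

lemma infinite_nn_polys_at:
  assumes "f \<in> nn_polys_at \<beta> \<alpha>" and "g \<noteq> 0"
    and g: "poly (map_poly of_nat g) \<beta> = (1 - \<beta>) * \<alpha>"
  shows "infinite (nn_polys_at \<beta> \<alpha>)"
proof -
  let ?S = "nn_polys_at \<beta> \<alpha>"
  have step: "pCons 0 p + g \<in> ?S" "poly p 1 < poly (pCons 0 p + g) 1" if "p \<in> ?S" for p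
    using that g poly_nat_one_pos[OF \<open>g \<noteq> 0\<close>]
    by (auto simp: nn_polys_at_def map_poly_of_nat_add map_poly_pCons algebra_simps)
  have "infinite ((\<lambda>p. poly p 1) ` ?S)"
    using assms(1) step by (intro infinite_growing) blast+
  then show ?thesis by blast
qed

lemma one_minus_mult_staircase_sum:
  fixes x :: "'a::comm_ring_1"
  shows "(1 - x) * (\<Sum>j=1..n. \<Sum>k=1..j. x^k) = of_nat n * x - (\<Sum>j=1..n. x^(j+1))"
proof -
  have "(1 - x) * (\<Sum>k=1..j. x^k) = x - x^(j+1)" if "j \<in> {1..n}" for j
    using that sum_gp_multiplied[of 1 j x] by simp
  then show ?thesis by (simp add: sum_distrib_left sum_subtractf)
qed

lemma sum_powers_shift:
  fixes x :: "'a::comm_ring_1"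
  shows "x * (\<Sum>j=1..n. x^(j+1)) + x^2 = (\<Sum>j=1..n. x^(j+1)) + x^(n+2)"
  by (induction n) (simp_all add: algebra_simps power2_eq_square)

lemma one_minus_mult_eq_at_quadratic_root:
  fixes x :: "'a::comm_ring_1" and a b c d e :: nat
  assumes root: "of_nat a * x^2 + of_nat c = of_nat b * x"
    and d: "a + c = b + 1 + d" and e: "2 * a = b + e"
  shows "(1 - x) * ((\<Sum>j=1..b. \<Sum>k=1..j. x^k) + of_nat a * x^(b+2))
       = of_nat c + of_nat c * x + of_nat d * (\<Sum>j=1..b. x^(j+1)) + of_nat e * x^(b+2)"
proof -
  define s where "s = (\<Sum>j=1..b. x^(j+1))"
  define y where "y = x^(b+2)"
  have xs: "x * s + x^2 = s + y"
    unfolding s_def y_def by (rule sum_powers_shift)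
  have x_mult_geom: "x * (1 + x + s) = x + s + y"
    and x_mult_shifted: "x * (x + s + y) = s + y + x * y"
    using xs by (simp_all add: algebra_simps power2_eq_square)
  have "0 = (of_nat a * x^2 + of_nat c - of_nat b * x) * (1 + x + s)"
    using root by simp
  also have "\<dots> = of_nat c * (1 + x + s) + of_nat a * (x * (x * (1 + x + s)))
      - of_nat b * (x * (1 + x + s))"
    by (simp add: algebra_simps power2_eq_square)
  also have "\<dots> = of_nat c * (1 + x + s) + of_nat a * (s + y + x * y) - of_nat b * (x + s + y)"
    by (simp only: x_mult_geom x_mult_shifted)
  finally have root_mult_geom:
      "of_nat c * (1 + x + s) + of_nat a * (s + y + x * y) - of_nat b * (x + s + y) = 0"
    by simp
  have d': "of_nat d = of_nat a + of_nat c - of_nat b - (1 :: 'a)"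
    using arg_cong[OF d, where f = "of_nat :: nat \<Rightarrow> 'a"] by (simp add: algebra_simps)
  have e': "of_nat e = 2 * of_nat a - (of_nat b :: 'a)"
    using arg_cong[OF e, where f = "of_nat :: nat \<Rightarrow> 'a"] by (simp add: algebra_simps)
  have "(1 - x) * ((\<Sum>j=1..b. \<Sum>k=1..j. x^k) + of_nat a * y)
      = of_nat b * x - s + of_nat a * y - of_nat a * (x * y)"
    unfolding s_def distrib_left one_minus_mult_staircase_sum by (simp add: algebra_simps)
  also have "\<dots> = of_nat b * x - s + of_nat a * y - of_nat a * (x * y)
      + (of_nat c * (1 + x + s) + of_nat a * (s + y + x * y) - of_nat b * (x + s + y))"
    by (simp only: root_mult_geom add_0_right)
  also have "\<dots> = of_nat c + of_nat c * x + of_nat d * s + of_nat e * y"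
    unfolding d' e' by (simp add: algebra_simps)
  finally show ?thesis
    unfolding s_def y_def .
qed

theorem lemma6:
  fixes A B C :: int and \<beta> :: real
  assumes "A > 0" "C > 0" "B < 0" "2 * A + B > 0" "A + B + C > 0"
    and "irreducible [:rat_of_int C, rat_of_int B, rat_of_int A:]"
    and "real_of_int A * \<beta>^2 + real_of_int B * \<beta> + real_of_int C = 0"
  shows "\<exists>\<alpha>::real. p_count (complex_of_real \<beta>) (complex_of_real \<alpha>) = \<infinity>"
proof -
  define a where "a = nat A"
  define b where "b = nat (- B)"
  define c where "c = nat C"
  define d where "d = nat (A + B + C - 1)"
  define e where "e = nat (2 * A + B)"
  define Q :: "nat poly" where "Q = (\<Sum>j=1..b. \<Sum>k=1..j. monom 1 k) + monom a (b + 2)"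
  define Q' :: "nat poly" where
    "Q' = monom c 0 + monom c 1 + (\<Sum>j=1..b. monom d (j + 1)) + monom e (b + 2)"
  define \<alpha> where "\<alpha> = poly (map_poly of_nat Q) \<beta>"
  have root: "of_nat a * \<beta>^2 + of_nat c = of_nat b * \<beta>"
    using assms(1-3,7) by (simp add: a_def b_def c_def algebra_simps)
  have "a + c = b + 1 + d" "2 * a = b + e"
    using assms(1-5) by (simp_all add: a_def b_def c_def d_def e_def nat_add_distrib flip: nat_1)
  from one_minus_mult_eq_at_quadratic_root[OF root this]
  have "poly (map_poly of_nat Q') \<beta> = (1 - \<beta>) * \<alpha>"
    by (simp add: Q_def Q'_def \<alpha>_def map_poly_of_nat_add map_poly_of_nat_sum map_poly_monom
        poly_sum poly_monom sum_distrib_left)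
  then have "poly (map_poly of_nat Q') (complex_of_real \<beta>) = (1 - of_real \<beta>) * of_real \<alpha>"
    by (simp add: poly_map_poly_of_nat_of_real)
  moreover have "Q \<in> nn_polys_at (of_real \<beta>) (of_real \<alpha>)"
    by (simp add: nn_polys_at_def \<alpha>_def poly_map_poly_of_nat_of_real)
  moreover have "Q' \<noteq> 0"
  proof -
    have "poly Q' 0 = c"
      by (simp add: Q'_def poly_sum poly_monom)
    then show ?thesis
      using assms(2) c_def by auto
  qed
  ultimately have "infinite (nn_polys_at (of_real \<beta>) (of_real \<alpha>))"
    by (intro infinite_nn_polys_at)
  then show ?thesis by (auto simp: p_count_def)
qed

end
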